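(* Let $\mathcal{H}$ be a real Hilbert space and $\mathsf{T}:\mathcal{H}\to2^{\mathcal{H}}$ a set-valued operator. The following are equivalent: (1) $\mathsf{T}=\partial\psi$ for some $\psi\in\Gamma_0(\mathcal{H})$; (2) $\mathsf{T}=\mathbf{Prox}_{\phi}$ for some $\phi:\mathcal{H}\to(-\infty,+\infty]$ with $\phi+\tfrac12\|\cdot\|^2\in\Gamma_0(\mathcal{H})$. Moreover, if these statements hold, then $\phi=\psi^*-\tfrac12\|\cdot\|^2$ (equivalently, $\psi=(\phi+\tfrac12\|\cdot\|^2)^*$).
   Context: $\Gamma_0(\mathcal{H})$ is the set of proper lower semicontinuous convex functions $\mathcal{H}\to(-\infty,+\infty]$. $\partial$ denotes the subdifferential $\partial g(x)=\{z:\langle y-x,z\rangle+g(x)\le g(y)\ \forall y\}$; $\psi^*$ is the Fenchel conjugate $\psi^*(u)=\sup_x(\langle x,u\rangle-\psi(x))$. For proper $\phi$, $\mathbf{Prox}_{\phi}(x)=\operatorname{argmin}_{y}\big(\phi(y)+\frac12\|x-y\|^2\big)$ (set-valued). *)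

theory Defs
  imports "HOL-Analysis.Analysis"
begin

definition proper_fun :: "('a \<Rightarrow> ereal) \<Rightarrow> bool" where
  "proper_fun f \<longleftrightarrow> (\<forall>x. f x \<noteq> -\<infinity>) \<and> (\<exists>x. f x \<noteq> \<infinity>)"

definition lsc_fun :: "('a::topological_space \<Rightarrow> ereal) \<Rightarrow> bool" where
  "lsc_fun f \<longleftrightarrow> (\<forall>c::ereal. closed {x. f x \<le> c})"

definition convex_fun :: "('a::real_vector \<Rightarrow> ereal) \<Rightarrow> bool" where
  "convex_fun f \<longleftrightarrow> (\<forall>x y t. 0 < t \<and> t < 1 \<longrightarrow>
      f (t *\<^sub>R x + (1 - t) *\<^sub>R y) \<le> ereal t * f x + ereal (1 - t) * f y)"

definition Gamma0 :: "('a::real_inner \<Rightarrow> ereal) \<Rightarrow> bool" where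
  "Gamma0 f \<longleftrightarrow> proper_fun f \<and> lsc_fun f \<and> convex_fun f"

definition subdiff :: "('a::real_inner \<Rightarrow> ereal) \<Rightarrow> 'a \<Rightarrow> 'a set" where
  "subdiff g x = {z. \<forall>y. ereal (inner (y - x) z) + g x \<le> g y}"

definition fconj :: "('a::real_inner \<Rightarrow> ereal) \<Rightarrow> 'a \<Rightarrow> ereal" where
  "fconj \<psi> u = (SUP x. ereal (inner x u) - \<psi> x)"

definition hsq :: "'a::real_normed_vector \<Rightarrow> ereal" where
  "hsq x = ereal (norm x ^ 2 / 2)"

definition Prox :: "('a::real_normed_vector \<Rightarrow> ereal) \<Rightarrow> 'a \<Rightarrow> 'a set" where
  "Prox \<phi> x = {y. \<forall>w. \<phi> y + hsq (x - y) \<le> \<phi> w + hsq (x - w)}"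

end

theory Submission
  imports Defs
begin

text \<open>
  Completing the square gives phi y + 1/2 ||x - y||^2 = 1/2 ||x||^2 - (<y, x> - f y) with
  f = phi + 1/2 ||.||^2, so Prox phi x is the set of points where the supremum defining f* x is
  attained. For f in Gamma0 these points are exactly the subgradients of f* at x: this is the
  equality case of the Fenchel-Young inequality combined with the Fenchel-Moreau theorem f** = f.
  Hence Prox phi is the subdifferential of (phi + 1/2 ||.||^2)*, and conversely the subdifferential
  of psi is Prox (psi* - 1/2 ||.||^2) because psi = psi**. Fenchel-Moreau rests on affine minorants,
  obtained by projecting onto the closed convex epigraph of f in the Hilbert space H x R.
\<close>

lemma apollonius:
  fixes a b z :: "'a::real_inner"
  shows "norm (a - b)^2 = 2 * norm (z - a)^2 + 2 * norm (z - b)^2 - 4 * norm (z - midpoint a b)^2"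
proof -
  have "z - midpoint a b = (1/2) *\<^sub>R ((z - a) + (z - b))"
    by (simp add: midpoint_def scaleR_add_right scaleR_diff_right flip: scaleR_add_left)
  then have "4 * norm (z - midpoint a b)^2 = norm ((z - a) + (z - b))^2"
    by (simp add: power_divide)
  moreover have "norm ((z - a) + (z - b))^2 + norm ((z - a) - (z - b))^2
      = 2 * norm (z - a)^2 + 2 * norm (z - b)^2"
    unfolding power2_norm_eq_inner by (simp add: inner_add inner_diff inner_commute)
  moreover have "(z - a) - (z - b) = b - a" by simp
  ultimately show ?thesis by (simp add: norm_minus_commute)
qed

lemma convex_minimizing_sequence_Cauchy:
  fixes S :: "'a::real_inner set"
  assumes "convex S" and XS: "\<And>n. X n \<in> S" and lim: "(\<lambda>n. dist z (X n)) \<longlonglongrightarrow> infdist z S"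
  shows "Cauchy X"
proof (rule metric_CauchyI)
  fix e :: real
  assume "0 < e"
  define d where "d = infdist z S"
  define h where "h n = dist z (X n)^2 - d^2" for n
  have close: "dist (X m) (X n)^2 \<le> 2 * h m + 2 * h n" for m n
  proof -
    have "midpoint (X m) (X n) \<in> S"
      unfolding midpoint_def using convexD[OF \<open>convex S\<close> XS XS, of "1/2" "1/2"]
      by (simp add: scaleR_add_right)
    then have "d \<le> norm (z - midpoint (X m) (X n))"
      unfolding d_def dist_norm[symmetric] by (rule infdist_le)
    then have "d^2 \<le> norm (z - midpoint (X m) (X n))^2"
      by (rule power_mono) (simp add: d_def infdist_nonneg)
    then show ?thesis
      using apollonius[of "X m" "X n" z] by (simp add: h_def dist_norm)
  qed
  have "h \<longlonglongrightarrow> d^2 - d^2"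
    unfolding h_def d_def by (intro tendsto_intros lim)
  moreover have "d^2 - d^2 < e^2 / 4"
    using \<open>0 < e\<close> by simp
  ultimately have "\<forall>\<^sub>F n in sequentially. h n < e^2 / 4"
    by (rule order_tendstoD(2))
  then obtain M where M: "\<And>n. M \<le> n \<Longrightarrow> h n < e^2 / 4"
    by (auto simp: eventually_sequentially)
  have "dist (X m) (X n) < e" if "M \<le> m" and "M \<le> n" for m n
  proof -
    have "dist (X m) (X n)^2 < e^2"
      using close[of m n] M[OF that(1)] M[OF that(2)] by linarith
    then show ?thesis
      using \<open>0 < e\<close> by (simp add: power_less_imp_less_base)
  qed
  then show "\<exists>M. \<forall>m\<ge>M. \<forall>n\<ge>M. dist (X m) (X n) < e"
    by blast
qed

lemma closest_point_exists_complete: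
  fixes S :: "'a::{real_inner,complete_space} set"
  assumes "closed S" and "convex S" and "S \<noteq> {}"
  obtains p where "p \<in> S" and "\<And>x. x \<in> S \<Longrightarrow> dist z p \<le> dist z x"
proof -
  define d where "d = infdist z S"
  have "\<exists>x\<in>S. dist z x < d + 1 / Suc n" for n
    using \<open>S \<noteq> {}\<close> by (simp add: d_def infdist_notempty cINF_less_iff[symmetric])
  then obtain X where XS: "\<And>n. X n \<in> S" and Xd: "\<And>n. dist z (X n) < d + 1 / Suc n"
    by metis
  have lim: "(\<lambda>n. dist z (X n)) \<longlonglongrightarrow> d"
  proof (rule tendsto_sandwich[OF _ _ tendsto_const])
    show "\<forall>\<^sub>F n in sequentially. d \<le> dist z (X n)"
      by (simp add: d_def XS infdist_le)
    show "\<forall>\<^sub>F n in sequentially. dist z (X n) \<le> d + 1 / Suc n"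
      by (intro always_eventually allI less_imp_le Xd)
    show "(\<lambda>n. d + 1 / Suc n) \<longlonglongrightarrow> d"
      using tendsto_add[OF tendsto_const LIMSEQ_inverse_real_of_nat, of d]
      by (simp add: inverse_eq_divide)
  qed
  have "Cauchy X"
    using \<open>convex S\<close> XS lim unfolding d_def by (rule convex_minimizing_sequence_Cauchy)
  then obtain p where "X \<longlonglongrightarrow> p"
    using Cauchy_convergent_iff convergent_def by blast
  then have "p \<in> S" and "(\<lambda>n. dist z (X n)) \<longlonglongrightarrow> dist z p"
    using \<open>closed S\<close> XS closed_sequentially by (blast, intro tendsto_intros)
  then show ?thesis
    using that LIMSEQ_unique[OF lim] infdist_le d_def by metis
qed

lemma proper_fun_not_MInf: "proper_fun f \<Longrightarrow> f x \<noteq> -\<infinity>"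
  unfolding proper_fun_def by blast

lemma proper_fun_finite_point:
  assumes "proper_fun f"
  obtains x r where "f x = ereal r"
  using assms unfolding proper_fun_def by (metis ereal_cases)

definition epigraph_ereal :: "('a \<Rightarrow> ereal) \<Rightarrow> ('a \<times> real) set" where
  "epigraph_ereal f = {(x, r). f x \<le> ereal r}"

lemma closed_epigraph_ereal:
  assumes "lsc_fun f"
  shows "closed (epigraph_ereal f)"
proof -
  have "q \<notin> epigraph_ereal f \<longleftrightarrow> (\<exists>c. ereal c < f (fst q) \<and> snd q < c)" for q
  proof -
    have "q \<notin> epigraph_ereal f \<longleftrightarrow> ereal (snd q) < f (fst q)"
      by (auto simp: epigraph_ereal_def split: prod.splits)
    also have "\<dots> \<longleftrightarrow> (\<exists>c. ereal c < f (fst q) \<and> snd q < c)"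
      by (metis ereal_dense2 less_ereal.simps(1) less_trans)
    finally show ?thesis .
  qed
  then have "- epigraph_ereal f = (\<Union>c. {x. ereal c < f x} \<times> {..<c})"
    by (intro set_eqI) (simp add: mem_Times_iff)
  moreover have "open {x. ereal c < f x}" for c
    using assms unfolding lsc_fun_def by (simp add: not_le[symmetric] Collect_neg_eq open_Compl)
  ultimately show ?thesis
    unfolding closed_def by (auto intro!: open_UN open_Times)
qed

lemma convex_epigraph_ereal:
  assumes "convex_fun f"
  shows "convex (epigraph_ereal f)"
  unfolding convex_alt
proof (intro ballI allI impI)
  fix p q and u :: real
  assume p: "p \<in> epigraph_ereal f" and q: "q \<in> epigraph_ereal f" and u: "0 \<le> u \<and> u \<le> 1"
  obtain x r y s where [simp]: "p = (x, r)" "q = (y, s)"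
    by fastforce
  have fx: "f x \<le> ereal r" and fy: "f y \<le> ereal s"
    using p q by (simp_all add: epigraph_ereal_def)
  consider "u = 0" | "u = 1" | "0 < u" "u < 1"
    using u by linarith
  then show "(1 - u) *\<^sub>R p + u *\<^sub>R q \<in> epigraph_ereal f"
  proof cases
    case 3
    have "f ((1 - u) *\<^sub>R x + (1 - (1 - u)) *\<^sub>R y) \<le> ereal (1 - u) * f x + ereal (1 - (1 - u)) * f y"
      using assms[unfolded convex_fun_def, rule_format, of "1 - u" x y] 3 by simp
    also have "\<dots> \<le> ereal (1 - u) * ereal r + ereal (1 - (1 - u)) * ereal s"
      using fx fy 3 by (intro add_mono ereal_mult_left_mono) auto
    finally show ?thesis
      by (simp add: epigraph_ereal_def)
  qed (use fx fy in \<open>simp_all add: epigraph_ereal_def\<close>)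
qed

lemma epigraph_projection:
  fixes f :: "'a::{real_inner,complete_space} \<Rightarrow> ereal"
  assumes "Gamma0 f"
  obtains y s where "f y \<le> ereal s"
    and "\<And>x r. f x \<le> ereal r \<Longrightarrow> inner (x0 - y) (x - y) + (\<alpha> - s) * (r - s) \<le> 0"
proof -
  let ?E = "epigraph_ereal f"
  have "closed ?E" and "convex ?E"
    using assms by (simp_all add: Gamma0_def closed_epigraph_ereal convex_epigraph_ereal)
  moreover obtain x1 r1 where "f x1 = ereal r1"
    using assms proper_fun_finite_point by (auto simp: Gamma0_def)
  then have "(x1, r1) \<in> ?E"
    by (simp add: epigraph_ereal_def)
  then have "?E \<noteq> {}"
    by blast
  ultimately obtain p where "p \<in> ?E" and "\<And>q. q \<in> ?E \<Longrightarrow> dist (x0, \<alpha>) p \<le> dist (x0, \<alpha>) q"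
    using closest_point_exists_complete by blast
  moreover obtain y s where p: "p = (y, s)"
    by fastforce
  ultimately show ?thesis
    using that any_closest_point_dot[OF \<open>convex ?E\<close> \<open>closed ?E\<close> \<open>p \<in> ?E\<close>, of _ "(x0, \<alpha>)"]
    by (force simp: epigraph_ereal_def)
qed

lemma affine_minorant_of_nonvertical_normal:
  assumes "proper_fun f" and "\<alpha> < s"
    and normal: "\<And>x r. f x = ereal r \<Longrightarrow> inner (x0 - y) (x - y) + (\<alpha> - s) * (r - s) \<le> 0"
  shows "\<exists>u \<beta>. (\<forall>x. ereal (inner x u - \<beta>) \<le> f x) \<and> \<alpha> < inner x0 u - \<beta>"
proof -
  define u where "u = (1 / (s - \<alpha>)) *\<^sub>R (x0 - y)"
  define \<beta> where "\<beta> = inner y u - s"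
  have affine: "inner x u - \<beta> = inner (x0 - y) (x - y) / (s - \<alpha>) + s" for x
  proof -
    have "inner x u - \<beta> = inner (x - y) u + s"
      by (simp add: \<beta>_def inner_diff_left)
    then show ?thesis
      by (simp add: u_def inner_commute)
  qed
  have "ereal (inner x u - \<beta>) \<le> f x" for x
  proof (cases "f x")
    case (real r)
    have "(\<alpha> - s) * (r - s) = - ((r - s) * (s - \<alpha>))"
      by (simp add: algebra_simps)
    then have "inner (x0 - y) (x - y) \<le> (r - s) * (s - \<alpha>)"
      using normal[OF real] by linarith
    then have "inner (x0 - y) (x - y) / (s - \<alpha>) \<le> r - s"
      using \<open>\<alpha> < s\<close> by (simp add: pos_divide_le_eq)
    then show ?thesis
      using real affine[of x] by simp
  qed (use proper_fun_not_MInf[OF \<open>proper_fun f\<close>] in auto)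
  moreover have "\<alpha> < inner x0 u - \<beta>"
    using affine[of x0] \<open>\<alpha> < s\<close> by (simp add: add_strict_increasing2)
  ultimately show ?thesis
    by blast
qed

lemma epigraph_separation:
  fixes f :: "'a::{real_inner,complete_space} \<Rightarrow> ereal"
  assumes "Gamma0 f" and "ereal \<alpha> < f x0"
  shows "(\<exists>u \<beta>. (\<forall>x. ereal (inner x u - \<beta>) \<le> f x) \<and> \<alpha> < inner x0 u - \<beta>) \<or>
         (\<exists>v c. (\<forall>x. f x \<noteq> \<infinity> \<longrightarrow> inner x v \<le> c) \<and> c < inner x0 v)"
proof -
  have proper: "proper_fun f"
    using assms(1) by (simp add: Gamma0_def)
  obtain y s where fy: "f y \<le> ereal s"
    and normal: "\<And>x r. f x \<le> ereal r \<Longrightarrow> inner (x0 - y) (x - y) + (\<alpha> - s) * (r - s) \<le> 0"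
    using epigraph_projection[OF assms(1)] by blast
  have "\<alpha> \<le> s"
    using normal[of y "s + 1"] fy by (simp add: order_trans)
  show ?thesis
  proof (cases "\<alpha> < s")
    case True
    have "\<exists>u \<beta>. (\<forall>x. ereal (inner x u - \<beta>) \<le> f x) \<and> \<alpha> < inner x0 u - \<beta>"
      using affine_minorant_of_nonvertical_normal[OF proper True, where y = y] normal by simp
    then show ?thesis
      by blast
  next
    case False
    with \<open>\<alpha> \<le> s\<close> have "\<alpha> = s"
      by simp
    have "inner x (x0 - y) \<le> inner y (x0 - y)" if "f x \<noteq> \<infinity>" for x
    proof -
      obtain r where "f x = ereal r"
        using \<open>f x \<noteq> \<infinity>\<close> proper_fun_not_MInf[OF proper, of x] by (cases "f x") auto
      then show ?thesis
        using normal[of x r] \<open>\<alpha> = s\<close> by (simp add: inner_diff_left inner_diff_right inner_commute)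
    qed
    moreover have "x0 \<noteq> y"
      using assms(2) fy \<open>\<alpha> = s\<close> by auto
    then have "inner y (x0 - y) < inner x0 (x0 - y)"
      using inner_gt_zero_iff[of "x0 - y"] by (simp add: inner_diff_left)
    ultimately show ?thesis
      by blast
  qed
qed

lemma exists_affine_minorant:
  fixes f :: "'a::{real_inner,complete_space} \<Rightarrow> ereal"
  assumes "Gamma0 f"
  obtains u \<beta> where "\<And>x. ereal (inner x u - \<beta>) \<le> f x"
proof -
  obtain x1 r1 where x1: "f x1 = ereal r1"
    using assms proper_fun_finite_point by (auto simp: Gamma0_def)
  then have "ereal (r1 - 1) < f x1"
    by simp
  from epigraph_separation[OF assms this] show ?thesis
  proof (elim disjE exE conjE)
    fix v c
    assume "\<forall>x. f x \<noteq> \<infinity> \<longrightarrow> inner x v \<le> c" and "c < inner x1 v"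
    moreover have "f x1 \<noteq> \<infinity>"
      using x1 by simp
    ultimately show ?thesis
      by force
  qed (use that in blast)
qed

lemma affine_minorant_above:
  fixes f :: "'a::{real_inner,complete_space} \<Rightarrow> ereal"
  assumes "Gamma0 f" and "ereal \<alpha> < f x0"
  shows "\<exists>u \<beta>. (\<forall>x. ereal (inner x u - \<beta>) \<le> f x) \<and> \<alpha> < inner x0 u - \<beta>"
proof -
  obtain u0 \<beta>0 where minorant0: "\<And>x. ereal (inner x u0 - \<beta>0) \<le> f x"
    using exists_affine_minorant[OF assms(1)] by blast
  from epigraph_separation[OF assms] show ?thesis
  proof (elim disjE exE conjE)
    \<comment> \<open>Tilt the minorant by a large multiple of the functional separating x0 from the domain.\<close>
    fix v c
    assume dom: "\<forall>x. f x \<noteq> \<infinity> \<longrightarrow> inner x v \<le> c" and "c < inner x0 v"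
    define g where "g = inner x0 v - c"
    define a0 where "a0 = inner x0 u0 - \<beta>0"
    define t where "t = max 0 ((\<alpha> - a0) / g + 1)"
    have "0 < g" and "0 \<le> t"
      using \<open>c < inner x0 v\<close> by (simp_all add: g_def t_def)
    have affine: "inner x (u0 + t *\<^sub>R v) - (\<beta>0 + t * c) = (inner x u0 - \<beta>0) + t * (inner x v - c)" for x
      by (simp add: inner_add_right algebra_simps)
    have "ereal (inner x (u0 + t *\<^sub>R v) - (\<beta>0 + t * c)) \<le> f x" for x
    proof (cases "f x = \<infinity>")
      case False
      then have "t * (inner x v - c) \<le> 0"
        using dom \<open>0 \<le> t\<close> by (simp add: mult_nonneg_nonpos)
      then have "ereal (inner x (u0 + t *\<^sub>R v) - (\<beta>0 + t * c)) \<le> ereal (inner x u0 - \<beta>0)"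
        using affine[of x] by simp
      then show ?thesis
        using minorant0[of x] by (rule order_trans)
    qed simp
    moreover have "\<alpha> < inner x0 (u0 + t *\<^sub>R v) - (\<beta>0 + t * c)"
    proof -
      have "((\<alpha> - a0) / g + 1) * g \<le> t * g"
        unfolding t_def using \<open>0 < g\<close> by (intro mult_right_mono) auto
      moreover have "((\<alpha> - a0) / g + 1) * g = \<alpha> - a0 + g"
        using \<open>0 < g\<close> by (simp add: field_simps)
      ultimately have "\<alpha> - a0 + g \<le> t * g"
        by simp
      then show ?thesis
        using affine[of x0] \<open>0 < g\<close> by (simp add: a0_def g_def)
    qed
    ultimately show ?thesis
      by blast
  qed blast
qed

lemma fenchel_young: "ereal (inner x u) - f x \<le> fconj f u"
  unfolding fconj_def by (rule SUP_upper) simp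

lemma fconj_leI: "(\<And>x. ereal (inner x u) - f x \<le> c) \<Longrightarrow> fconj f u \<le> c"
  unfolding fconj_def by (rule SUP_least)

lemma fconj_le_of_affine_minorant:
  assumes "\<And>x. ereal (inner x u - \<beta>) \<le> f x"
  shows "fconj f u \<le> ereal \<beta>"
proof (rule fconj_leI)
  fix x
  show "ereal (inner x u) - f x \<le> ereal \<beta>"
    using assms[of x] by (cases "f x") auto
qed

lemma fconj_not_MInf:
  assumes "f x \<noteq> \<infinity>"
  shows "fconj f u \<noteq> -\<infinity>"
  using fenchel_young[of x u f] assms by (cases "f x") auto

lemma lsc_fun_fconj: "lsc_fun (fconj f)"
  unfolding lsc_fun_def
proof
  fix c :: ereal
  have "continuous_on UNIV (\<lambda>u. ereal (inner x u) - f x)" for x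
    by (cases "f x") (auto intro!: continuous_intros)
  then have "closed {u. ereal (inner x u) - f x \<le> c}" for x
    by (intro closed_Collect_le continuous_on_const)
  moreover have "{u. fconj f u \<le> c} = (\<Inter>x. {u. ereal (inner x u) - f x \<le> c})"
    by (auto intro: fconj_leI order_trans[OF fenchel_young])
  ultimately show "closed {u. fconj f u \<le> c}"
    by (simp add: closed_INT)
qed

lemma convex_fun_fconj: "convex_fun (fconj f)"
  unfolding convex_fun_def
proof (intro allI impI)
  fix a b :: 'a and t :: real
  assume t: "0 < t \<and> t < 1"
  show "fconj f (t *\<^sub>R a + (1 - t) *\<^sub>R b) \<le> ereal t * fconj f a + ereal (1 - t) * fconj f b"
  proof (rule fconj_leI)
    fix x
    have ya: "ereal (inner x a) - f x \<le> fconj f a" and yb: "ereal (inner x b) - f x \<le> fconj f b"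
      by (rule fenchel_young)+
    show "ereal (inner x (t *\<^sub>R a + (1 - t) *\<^sub>R b)) - f x \<le> ereal t * fconj f a + ereal (1 - t) * fconj f b"
    proof (cases "f x")
      case (real r)
      have "ereal (inner x (t *\<^sub>R a + (1 - t) *\<^sub>R b)) - f x
          = ereal t * ereal (inner x a - r) + ereal (1 - t) * ereal (inner x b - r)"
        using real by (simp add: inner_add_right algebra_simps)
      also have "\<dots> \<le> ereal t * fconj f a + ereal (1 - t) * fconj f b"
        using ya yb real t by (intro add_mono ereal_mult_left_mono) auto
      finally show ?thesis .
    next
      case MInf
      then have "fconj f a = \<infinity>" and "fconj f b = \<infinity>"
        using ya yb by simp_all
      then show ?thesis
        using MInf t by simp
    qed simp
  qed
qed

lemma proper_fun_fconj:
  fixes f :: "'a::{real_inner,complete_space} \<Rightarrow> ereal"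
  assumes "Gamma0 f"
  shows "proper_fun (fconj f)"
proof -
  obtain x1 r1 where x1: "f x1 = ereal r1"
    using assms proper_fun_finite_point by (auto simp: Gamma0_def)
  obtain u \<beta> where "\<And>x. ereal (inner x u - \<beta>) \<le> f x"
    using exists_affine_minorant[OF assms] by blast
  then have "fconj f u \<le> ereal \<beta>"
    by (rule fconj_le_of_affine_minorant)
  then have "fconj f u \<noteq> \<infinity>"
    by auto
  moreover have "fconj f v \<noteq> -\<infinity>" for v
    using x1 by (intro fconj_not_MInf[of f x1]) simp
  ultimately show ?thesis
    unfolding proper_fun_def by blast
qed

lemma Gamma0_fconj:
  fixes f :: "'a::{real_inner,complete_space} \<Rightarrow> ereal"
  assumes "Gamma0 f"
  shows "Gamma0 (fconj f)"
  using assms by (simp add: Gamma0_def proper_fun_fconj lsc_fun_fconj convex_fun_fconj)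

lemma ereal_minus_le_swap: "ereal a - b \<le> c \<Longrightarrow> ereal a - c \<le> b"
  by (cases b; cases c) auto

lemma fconj_fconj_le: "fconj (fconj f) x \<le> f x"
  by (rule fconj_leI, rule ereal_minus_le_swap, subst inner_commute, rule fenchel_young)

lemma fconj_fconj:
  fixes f :: "'a::{real_inner,complete_space} \<Rightarrow> ereal"
  assumes "Gamma0 f"
  shows "fconj (fconj f) = f"
proof
  fix x
  show "fconj (fconj f) x = f x"
  proof (rule antisym[OF fconj_fconj_le dense_le])
    fix y
    assume "y < f x"
    then obtain \<alpha> where "y < ereal \<alpha>" and "ereal \<alpha> < f x"
      using ereal_dense2 by blast
    obtain u \<beta> where minorant: "\<And>z. ereal (inner z u - \<beta>) \<le> f z" and "\<alpha> < inner x u - \<beta>"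
      using affine_minorant_above[OF assms \<open>ereal \<alpha> < f x\<close>] by blast
    have "fconj f u \<le> ereal \<beta>"
      using minorant by (rule fconj_le_of_affine_minorant)
    have "y < ereal \<alpha>"
      by fact
    also have "\<dots> < ereal (inner x u - \<beta>)"
      using \<open>\<alpha> < inner x u - \<beta>\<close> by simp
    also have "\<dots> \<le> ereal (inner u x) - fconj f u"
      using \<open>fconj f u \<le> ereal \<beta>\<close> by (cases "fconj f u") (auto simp: inner_commute)
    also have "\<dots> \<le> fconj (fconj f) x"
      by (rule fenchel_young)
    finally show "y \<le> fconj (fconj f) x"
      by simp
  qed
qed

definition fconj_argmax :: "('a::real_inner \<Rightarrow> ereal) \<Rightarrow> 'a \<Rightarrow> 'a set" where
  "fconj_argmax f u = {x. \<forall>w. ereal (inner w u) - f w \<le> ereal (inner x u) - f x}"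

lemma fconj_argmax_iff:
  assumes "proper_fun f"
  shows "x \<in> fconj_argmax f u \<longleftrightarrow> (\<exists>r. f x = ereal r \<and> fconj f u = ereal (inner x u - r))"
proof
  assume max: "x \<in> fconj_argmax f u"
  obtain x1 r1 where "f x1 = ereal r1"
    using proper_fun_finite_point[OF assms] .
  moreover have "ereal (inner x1 u) - f x1 \<le> ereal (inner x u) - f x"
    using max by (simp add: fconj_argmax_def)
  ultimately have "f x \<noteq> \<infinity>"
    by auto
  then obtain r where r: "f x = ereal r"
    using proper_fun_not_MInf[OF assms, of x] by (cases "f x") auto
  have "fconj f u = ereal (inner x u) - f x"
    using max by (intro antisym fconj_leI fenchel_young) (simp add: fconj_argmax_def)
  with r show "\<exists>r. f x = ereal r \<and> fconj f u = ereal (inner x u - r)"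
    by simp
next
  assume "\<exists>r. f x = ereal r \<and> fconj f u = ereal (inner x u - r)"
  then have "fconj f u = ereal (inner x u) - f x"
    by auto
  then show "x \<in> fconj_argmax f u"
    by (simp add: fconj_argmax_def) (metis fenchel_young)
qed

lemma subdiff_iff_fconj_argmax:
  assumes "proper_fun g"
  shows "y \<in> subdiff g x \<longleftrightarrow> x \<in> fconj_argmax g y"
proof (cases "g x")
  case (real c)
  have "ereal (inner (v - x) y) + ereal c \<le> g v \<longleftrightarrow> ereal (inner v y) - g v \<le> ereal (inner x y) - ereal c"
    for v
    using proper_fun_not_MInf[OF assms, of v] by (cases "g v") (auto simp: inner_diff_left)
  then show ?thesis
    by (simp add: subdiff_def fconj_argmax_def real)
next
  case PInf
  obtain x1 r1 where x1: "g x1 = ereal r1"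
    using proper_fun_finite_point[OF assms] .
  have "\<not> ereal (inner (x1 - x) y) + g x \<le> g x1"
    using PInf x1 by simp
  moreover have "\<not> ereal (inner x1 y) - g x1 \<le> ereal (inner x y) - g x"
    using PInf x1 by simp
  ultimately show ?thesis
    unfolding subdiff_def fconj_argmax_def by blast
qed (use proper_fun_not_MInf[OF assms] in simp)

lemma subdiff_fconj_eq_fconj_argmax:
  fixes f :: "'a::{real_inner,complete_space} \<Rightarrow> ereal"
  assumes "Gamma0 f"
  shows "subdiff (fconj f) = fconj_argmax f"
proof (intro ext set_eqI)
  fix x y
  have proper: "proper_fun f" and proper_conj: "proper_fun (fconj f)"
    using assms Gamma0_fconj[OF assms] by (simp_all only: Gamma0_def)
  have "y \<in> subdiff (fconj f) x \<longleftrightarrow> x \<in> fconj_argmax (fconj f) y"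
    by (rule subdiff_iff_fconj_argmax[OF proper_conj])
  also have "\<dots> \<longleftrightarrow> (\<exists>c. fconj f x = ereal c \<and> f y = ereal (inner x y - c))"
    by (simp add: fconj_argmax_iff[OF proper_conj] fconj_fconj[OF assms])
  also have "\<dots> \<longleftrightarrow> (\<exists>r. f y = ereal r \<and> fconj f x = ereal (inner y x - r))"
    by (auto simp: inner_commute)
  also have "\<dots> \<longleftrightarrow> y \<in> fconj_argmax f x"
    by (rule fconj_argmax_iff[OF proper, symmetric])
  finally show "y \<in> subdiff (fconj f) x \<longleftrightarrow> y \<in> fconj_argmax f x" .
qed

lemma hsq_diff: "hsq (x - y) = ereal (norm x ^ 2 / 2 - inner y x + norm y ^ 2 / 2)"
proof -
  have "norm (x - y)^2 = norm x^2 - 2 * inner y x + norm y^2"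
    unfolding power2_norm_eq_inner by (simp add: inner_diff_left inner_diff_right inner_commute)
  then show ?thesis
    unfolding hsq_def by simp
qed

lemma Prox_eq_fconj_argmax:
  assumes "\<And>x. \<phi> x \<noteq> -\<infinity>"
  shows "Prox \<phi> = fconj_argmax (\<lambda>x. \<phi> x + hsq x)"
proof (intro ext)
  fix x
  have "\<phi> y + hsq (x - y) = hsq x - (ereal (inner y x) - (\<phi> y + hsq y))" for y
    using assms[of y] unfolding hsq_diff by (cases "\<phi> y") (simp_all add: hsq_def)
  moreover have "(hsq x - a \<le> hsq x - b) \<longleftrightarrow> b \<le> a" for a b
    by (cases a; cases b) (simp_all add: hsq_def)
  ultimately show "Prox \<phi> x = fconj_argmax (\<lambda>x. \<phi> x + hsq x) x"
    by (simp add: Prox_def fconj_argmax_def)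
qed

lemma diff_hsq_add_hsq: "(a - hsq x) + hsq x = a"
  by (cases a) (simp_all add: hsq_def)

lemma Prox_eq_subdiff_fconj:
  fixes \<phi> :: "'a::{real_inner,complete_space} \<Rightarrow> ereal"
  assumes "\<And>x. \<phi> x \<noteq> -\<infinity>" and "Gamma0 (\<lambda>x. \<phi> x + hsq x)"
  shows "Prox \<phi> = subdiff (fconj (\<lambda>x. \<phi> x + hsq x))"
  by (simp add: Prox_eq_fconj_argmax[OF assms(1)] subdiff_fconj_eq_fconj_argmax[OF assms(2)])

lemma fconj_diff_hsq_not_MInf:
  fixes \<psi> :: "'a::{real_inner,complete_space} \<Rightarrow> ereal"
  assumes "Gamma0 \<psi>"
  shows "fconj \<psi> x - hsq x \<noteq> -\<infinity>"
  using proper_fun_not_MInf[OF proper_fun_fconj[OF assms], of x]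
  by (cases "fconj \<psi> x") (simp_all add: hsq_def)

lemma subdiff_eq_Prox_fconj_diff_hsq:
  fixes \<psi> :: "'a::{real_inner,complete_space} \<Rightarrow> ereal"
  assumes "Gamma0 \<psi>"
  shows "subdiff \<psi> = Prox (\<lambda>x. fconj \<psi> x - hsq x)"
proof -
  have sum: "(\<lambda>x. (fconj \<psi> x - hsq x) + hsq x) = fconj \<psi>"
    by (simp add: diff_hsq_add_hsq)
  have "Prox (\<lambda>x. fconj \<psi> x - hsq x) = subdiff (fconj (\<lambda>x. (fconj \<psi> x - hsq x) + hsq x))"
    by (rule Prox_eq_subdiff_fconj) (simp_all add: sum fconj_diff_hsq_not_MInf assms Gamma0_fconj)
  then show ?thesis
    by (simp add: sum fconj_fconj[OF assms])
qed

theorem proposition1: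
  fixes T :: "'a::{real_inner, complete_space} \<Rightarrow> 'a set"
  shows "((\<exists>\<psi>. Gamma0 \<psi> \<and> T = subdiff \<psi>) \<longleftrightarrow>
          (\<exists>\<phi>. (\<forall>x. \<phi> x \<noteq> -\<infinity>) \<and> Gamma0 (\<lambda>x. \<phi> x + hsq x) \<and> T = Prox \<phi>))
       \<and> (\<forall>\<psi>. Gamma0 \<psi> \<and> T = subdiff \<psi> \<longrightarrow>
            Gamma0 (\<lambda>x. (fconj \<psi> x - hsq x) + hsq x) \<and> T = Prox (\<lambda>x. fconj \<psi> x - hsq x))
       \<and> (\<forall>\<phi>. (\<forall>x. \<phi> x \<noteq> -\<infinity>) \<and> Gamma0 (\<lambda>x. \<phi> x + hsq x) \<and> T = Prox \<phi> \<longrightarrow>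
            Gamma0 (fconj (\<lambda>x. \<phi> x + hsq x)) \<and> T = subdiff (fconj (\<lambda>x. \<phi> x + hsq x)))"
proof -
  have subdiff_Prox: "(\<forall>x. fconj \<psi> x - hsq x \<noteq> -\<infinity>)
      \<and> Gamma0 (\<lambda>x. (fconj \<psi> x - hsq x) + hsq x) \<and> T = Prox (\<lambda>x. fconj \<psi> x - hsq x)"
    if "Gamma0 \<psi>" and "T = subdiff \<psi>" for \<psi>
    using that by (simp add: fconj_diff_hsq_not_MInf diff_hsq_add_hsq Gamma0_fconj subdiff_eq_Prox_fconj_diff_hsq)
  have Prox_subdiff: "Gamma0 (fconj (\<lambda>x. \<phi> x + hsq x)) \<and> T = subdiff (fconj (\<lambda>x. \<phi> x + hsq x))"
    if "\<forall>x. \<phi> x \<noteq> -\<infinity>" and "Gamma0 (\<lambda>x. \<phi> x + hsq x)" and "T = Prox \<phi>" for \<phi>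
    using that by (simp add: Gamma0_fconj Prox_eq_subdiff_fconj)
  show ?thesis
  proof (intro conjI iffI allI impI; elim exE conjE)
    fix \<psi>
    assume "Gamma0 \<psi>" and "T = subdiff \<psi>"
    from subdiff_Prox[OF this]
    show "\<exists>\<phi>. (\<forall>x. \<phi> x \<noteq> -\<infinity>) \<and> Gamma0 (\<lambda>x. \<phi> x + hsq x) \<and> T = Prox \<phi>"
      by (intro exI[of _ "\<lambda>x. fconj \<psi> x - hsq x"]) simp
  qed (use subdiff_Prox Prox_subdiff in \<open>blast+\<close>)
qed

end
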